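(* Let $\alpha\in(0,1)$ and $n\in\mathbb{N}$, and let $G$ be a graph on $n$ vertices with $\delta(G)\geq \alpha n$. If $u,v$ are vertices of $G$ such that there exists a walk of even length between $u$ and $v$, then there exists a walk of even length at most $4/\alpha$ between $u$ and $v$.
   Context: Graphs are finite and simple; $\delta(G)$ is the minimum degree. The length of a walk is its number of edges. *)

theory Defs
  imports Main "HOL-Library.Sublist" Complex_Main
begin

definition simple_graph :: "'a set \<Rightarrow> ('a \<Rightarrow> 'a \<Rightarrow> bool) \<Rightarrow> bool" where
  "simple_graph V E \<longleftrightarrow> finite V \<and> (\<forall>x y. E x y \<longrightarrow> x \<in> V \<and> y \<in> V)
     \<and> (\<forall>x y. E x y \<longrightarrow> E y x) \<and> (\<forall>x. \<not> E x x)"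

definition degree :: "'a set \<Rightarrow> ('a \<Rightarrow> 'a \<Rightarrow> bool) \<Rightarrow> 'a \<Rightarrow> nat" where
  "degree V E x = card {y \<in> V. E x y}"

definition is_walk :: "'a set \<Rightarrow> ('a \<Rightarrow> 'a \<Rightarrow> bool) \<Rightarrow> 'a list \<Rightarrow> bool" where
  "is_walk V E w \<longleftrightarrow> w \<noteq> [] \<and> set w \<subseteq> V \<and> (\<forall>i. Suc i < length w \<longrightarrow> E (w ! i) (w ! Suc i))"

definition walk_length :: "'a list \<Rightarrow> nat" where
  "walk_length w = length w - 1"

definition walk_between :: "'a set \<Rightarrow> ('a \<Rightarrow> 'a \<Rightarrow> bool) \<Rightarrow> 'a \<Rightarrow> 'a \<Rightarrow> 'a list \<Rightarrow> bool" where
  "walk_between V E u v w \<longleftrightarrow> is_walk V E w \<and> hd w = u \<and> last w = v"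

end

theory Submission
  imports Defs
begin

text \<open>Take a shortest even walk \<open>w\<^sub>0 \<dots> w\<^sub>L\<close> from \<open>u\<close> to \<open>v\<close>. For \<open>i < j\<close> the vertices
  \<open>w\<^sub>4\<^sub>i\<close> and \<open>w\<^sub>4\<^sub>j\<close> have no common neighbour \<open>y\<close>: otherwise
  \<open>w\<^sub>0 \<dots> w\<^sub>4\<^sub>i y w\<^sub>4\<^sub>j \<dots> w\<^sub>L\<close> would be an even walk shorter by \<open>4(j - i) - 2 > 0\<close>.
  Hence the \<open>\<lfloor>L/4\<rfloor> + 1\<close> neighbourhoods of \<open>w\<^sub>0, w\<^sub>4, w\<^sub>8, \<dots>\<close> are pairwise disjoint,
  each of size at least \<open>\<alpha>n\<close>, so \<open>(\<lfloor>L/4\<rfloor> + 1) \<alpha>n \<le> n\<close> and therefore \<open>L < 4/\<alpha>\<close>.\<close>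

definition neighbourhood :: "'a set \<Rightarrow> ('a \<Rightarrow> 'a \<Rightarrow> bool) \<Rightarrow> 'a \<Rightarrow> 'a set" where
  "neighbourhood V E x = {y \<in> V. E x y}"

definition shortest_even_walk :: "'a set \<Rightarrow> ('a \<Rightarrow> 'a \<Rightarrow> bool) \<Rightarrow> 'a \<Rightarrow> 'a \<Rightarrow> 'a list \<Rightarrow> bool" where
  "shortest_even_walk V E u v w \<longleftrightarrow> walk_between V E u v w \<and> even (walk_length w)
     \<and> (\<forall>w'. walk_between V E u v w' \<and> even (walk_length w') \<longrightarrow> walk_length w \<le> walk_length w')"

lemma is_walk_iff_successively:
  "is_walk V E w \<longleftrightarrow> w \<noteq> [] \<and> set w \<subseteq> V \<and> successively E w"
  by (simp add: is_walk_def successively_conv_nth)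

lemma length_eq_Suc_walk_length: "is_walk V E w \<Longrightarrow> length w = Suc (walk_length w)"
  by (cases w) (simp_all add: is_walk_def walk_length_def)

lemma walk_length_splice:
  assumes "i < j" "j < length w"
  shows "walk_length (take (Suc i) w @ y # drop j w) = i + 2 + (walk_length w - j)"
  using assms by (simp add: walk_length_def)

lemma walk_between_splice:
  assumes walk: "walk_between V E u v w" and ij: "i < j" "j < length w"
    and y: "y \<in> V" "E (w ! i) y" "E y (w ! j)"
  shows "walk_between V E u v (take (Suc i) w @ y # drop j w)"
proof -
  have w: "w \<noteq> []" "set w \<subseteq> V" "successively E w" "hd w = u" "last w = v"
    using walk by (auto simp: walk_between_def is_walk_iff_successively)
  have "successively E (take (Suc i) w)" "successively E (drop j w)"
    using w(3) successively_append_iff[of E "take (Suc i) w" "drop (Suc i) w"]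
      successively_append_iff[of E "take j w" "drop j w"] by simp_all
  moreover have "last (take (Suc i) w) = w ! i" "hd (drop j w) = w ! j" "drop j w \<noteq> []"
    using ij by (simp_all add: take_Suc_conv_app_nth hd_drop_conv_nth)
  ultimately have "successively E (take (Suc i) w @ y # drop j w)"
    using y by (auto simp: successively_append_iff successively_Cons)
  moreover have "set (take (Suc i) w @ y # drop j w) \<subseteq> V"
    using w(2) y(1) set_take_subset[of "Suc i" w] set_drop_subset[of j w] by auto
  ultimately show ?thesis
    using w ij by (cases w) (auto simp: walk_between_def is_walk_iff_successively)
qed

lemma shortest_even_walk_exists:
  assumes "walk_between V E u v w" "even (walk_length w)"
  obtains w' where "shortest_even_walk V E u v w'"
  using ex_has_least_nat[where P = "\<lambda>w. walk_between V E u v w \<and> even (walk_length w)"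
      and m = walk_length] assms
  unfolding shortest_even_walk_def by blast

lemma shortest_even_walk_disjoint_neighbourhoods:
  assumes shortest: "shortest_even_walk V E u v w" and sym: "\<And>x y. E x y \<Longrightarrow> E y x"
    and ij: "i + 2 < j" "even (j - i)" "j < length w"
  shows "neighbourhood V E (w ! i) \<inter> neighbourhood V E (w ! j) = {}"
proof (rule ccontr)
  assume "neighbourhood V E (w ! i) \<inter> neighbourhood V E (w ! j) \<noteq> {}"
  then obtain y where y: "y \<in> V" "E (w ! i) y" "E y (w ! j)"
    by (auto simp: neighbourhood_def dest: sym)
  let ?w' = "take (Suc i) w @ y # drop j w"
  have walk: "walk_between V E u v w" and "even (walk_length w)"
    using shortest by (simp_all add: shortest_even_walk_def)
  moreover have "j \<le> walk_length w"
    using ij by (simp add: walk_length_def)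
  ultimately have "walk_length ?w' < walk_length w" "even (walk_length ?w')"
    using ij by (simp_all add: walk_length_splice)
  moreover have "walk_between V E u v ?w'"
    using walk_between_splice[OF walk _ ij(3) y] ij(1) by simp
  ultimately show False
    using shortest by (auto simp: shortest_even_walk_def)
qed

lemma card_disjoint_subsets_ge:
  assumes "finite V" "finite I" "\<And>i. i \<in> I \<Longrightarrow> A i \<subseteq> V"
    and "\<And>i. i \<in> I \<Longrightarrow> d \<le> real (card (A i))"
    and "\<And>i j. i \<in> I \<Longrightarrow> j \<in> I \<Longrightarrow> i \<noteq> j \<Longrightarrow> A i \<inter> A j = {}"
  shows "real (card I) * d \<le> real (card V)"
proof -
  have "real (card I) * d = (\<Sum>i\<in>I. d)" by simp
  also have "\<dots> \<le> (\<Sum>i\<in>I. real (card (A i)))"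
    using assms(4) by (rule sum_mono)
  also have "\<dots> = real (card (\<Union>i\<in>I. A i))"
    using assms by (subst card_UN_disjoint) (auto intro: finite_subset)
  also have "\<dots> \<le> real (card V)"
    using assms by (simp add: card_mono UN_least)
  finally show ?thesis .
qed

lemma shortest_even_walk_length_bound:
  assumes graph: "simple_graph V E" and shortest: "shortest_even_walk V E u v w"
    and "0 < d" and min_degree: "\<forall>x\<in>V. d \<le> real (degree V E x)"
  shows "real (walk_length w) < 4 * real (card V) / d"
proof -
  define m where "m = walk_length w div 4"
  have sym: "\<And>x y. E x y \<Longrightarrow> E y x" and "finite V"
    using graph by (auto simp: simple_graph_def)
  have walk: "is_walk V E w"
    using shortest by (simp add: shortest_even_walk_def walk_between_def)
  have index: "4 * i < length w" if "i \<le> m" for i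
    using that walk by (simp add: m_def length_eq_Suc_walk_length)
  have packing: "real (card {..m}) * d \<le> real (card V)"
  proof (rule card_disjoint_subsets_ge[where A = "\<lambda>i. neighbourhood V E (w ! (4 * i))"])
    fix i assume "i \<in> {..m}"
    then have "w ! (4 * i) \<in> V"
      using index walk by (auto simp: is_walk_def)
    then show "d \<le> real (card (neighbourhood V E (w ! (4 * i))))"
      using min_degree by (simp add: neighbourhood_def degree_def)
  next
    have "neighbourhood V E (w ! (4 * i)) \<inter> neighbourhood V E (w ! (4 * j)) = {}"
      if "i < j" "j \<le> m" for i j
      using shortest_even_walk_disjoint_neighbourhoods[OF shortest sym, of "4 * i" "4 * j"]
        that index by simp
    then show "neighbourhood V E (w ! (4 * i)) \<inter> neighbourhood V E (w ! (4 * j)) = {}"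
      if "i \<in> {..m}" "j \<in> {..m}" "i \<noteq> j" for i j
      using that by (metis Int_commute atMost_iff linorder_neq_iff)
  qed (auto simp: neighbourhood_def \<open>finite V\<close>)
  have "walk_length w < 4 * card {..m}"
    unfolding m_def by simp
  then have "real (walk_length w) * d < 4 * real (card {..m}) * d"
    using \<open>0 < d\<close> by (metis mult_less_cancel_right_pos of_nat_less_iff of_nat_mult of_nat_numeral)
  also have "\<dots> \<le> 4 * real (card V)"
    using packing by (simp add: algebra_simps)
  finally show ?thesis
    using \<open>0 < d\<close> by (simp add: field_simps)
qed

theorem proposition4p5:
  fixes V :: "'a set" and E :: "'a \<Rightarrow> 'a \<Rightarrow> bool" and \<alpha> :: real and n :: nat
    and u v :: 'a
  assumes "0 < \<alpha>" and "\<alpha> < 1"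
    and "simple_graph V E" and "card V = n"
    and "\<forall>x\<in>V. real (degree V E x) \<ge> \<alpha> * real n"
    and "u \<in> V" and "v \<in> V"
    and "\<exists>w. walk_between V E u v w \<and> even (walk_length w)"
  shows "\<exists>w. walk_between V E u v w \<and> even (walk_length w)
           \<and> real (walk_length w) \<le> 4 / \<alpha>"
proof -
  obtain w where shortest: "shortest_even_walk V E u v w"
    using assms(8) shortest_even_walk_exists by metis
  have "0 < n"
    using assms(3,4,6) card_gt_0_iff unfolding simple_graph_def by blast
  then have "real (walk_length w) < 4 * real n / (\<alpha> * real n)"
    using shortest_even_walk_length_bound[OF assms(3) shortest _ assms(5)] assms(1,4) by simp
  also have "\<dots> = 4 / \<alpha>"
    using \<open>0 < n\<close> by simp
  finally show ?thesis
    using shortest by (auto simp: shortest_even_walk_def)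
qed

end
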